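(* Let $d:\Sigma^n\to\Sigma$ be a depth assignment and let $s,t\in\Sigma^n$ be such that $(s,t)$ is a valid arc of the de Bruijn graph $B_n$. Then \[e_{s[0]} \equiv P(H(s)+e_{d_s}) - P(H(t)+e_{d_t}) \mod K.\]
   Context: Let $k\ge 1$ be an integer, $\Sigma=\{0,1,\dots,k-1\}$ with arithmetic on symbols taken modulo $k$, and $n\ge 1$. For $s\in\Sigma^n$ write $s=s[0]\cdots s[n-1]$. The de Bruijn graph $B_n$ has node set $\Sigma^n$ and an arc $(s,t)$ iff $s[1]\cdots s[n-1]=t[0]\cdots t[n-2]$. A depth assignment is any function $d:\Sigma^n\to\Sigma$, written $s\mapsto d_s$. An arc $(s,t)$ of $B_n$ is valid (with respect to $d$) if, with $b=s[0]$ and $c=t[n-1]$, either ($b+1=c$ and $d_s=d_t$) or ($b+1=d_t$ and $c=d_s$). The histogram $H(s):\Sigma\to\mathbb{Z}$ counts occurrences of each symbol in $s$; $e_b$ is the indicator function of $b\in\Sigma$; $K$ is the constant function $1$ on $\Sigma$; $P(H)(i)=\sum_{j=0}^i H(j)$ is the partial sum of $H:\Sigma\to\mathbb{Z}$; $F\equiv G\mod K$ means $F-G$ is an integer multiple of $K$. *)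

theory Defs
  imports Main
begin

text \<open>Alphabet Sigma = {0..<k} (symbols are naturals < k), words of length n are
  lists of length n over Sigma. Functions Sigma to Z are modelled as nat to int,
  only their values on {0..<k} matter.\<close>

definition words :: "nat \<Rightarrow> nat \<Rightarrow> nat list set" where
  "words k n = {s. length s = n \<and> set s \<subseteq> {0..<k}}"

definition is_depth_assignment :: "nat \<Rightarrow> nat \<Rightarrow> (nat list \<Rightarrow> nat) \<Rightarrow> bool" where
  "is_depth_assignment k n d \<longleftrightarrow> (\<forall>s\<in>words k n. d s < k)"

definition db_arc :: "nat \<Rightarrow> nat \<Rightarrow> nat list \<Rightarrow> nat list \<Rightarrow> bool" where
  "db_arc k n s t \<longleftrightarrow> s \<in> words k n \<and> t \<in> words k n \<and> tl s = butlast t"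

definition valid_arc :: "nat \<Rightarrow> nat \<Rightarrow> (nat list \<Rightarrow> nat) \<Rightarrow> nat list \<Rightarrow> nat list \<Rightarrow> bool" where
  "valid_arc k n d s t \<longleftrightarrow> db_arc k n s t \<and>
     (let b = s ! 0; c = t ! (n - 1) in
       ((b + 1) mod k = c \<and> d s = d t) \<or> ((b + 1) mod k = d t \<and> c = d s))"

definition hist :: "nat list \<Rightarrow> nat \<Rightarrow> int" where
  "hist s j = int (count_list s j)"

definition indic :: "nat \<Rightarrow> nat \<Rightarrow> int" where
  "indic b j = (if j = b then 1 else 0)"

definition psum :: "(nat \<Rightarrow> int) \<Rightarrow> nat \<Rightarrow> int" where
  "psum H i = (\<Sum>j\<le>i. H j)"

text \<open>F = G mod K on Sigma: F - G is an integer multiple of the constant function 1.\<close>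
definition cong_K :: "nat \<Rightarrow> (nat \<Rightarrow> int) \<Rightarrow> (nat \<Rightarrow> int) \<Rightarrow> bool" where
  "cong_K k F G \<longleftrightarrow> (\<exists>c::int. \<forall>i<k. F i - G i = c)"

end

theory Submission
  imports Defs
begin

(* Along an arc (s, t) the histogram loses the symbol b = s[0] and gains c = t[n-1], so
   H(s) - H(t) = e_b - e_c. Partial sums turn each e_x into the step function
   P(e_x) = [x <= _], and either alternative in the validity condition makes the four step
   functions telescope to P(e_b) - P(e_(b+1)). Finally e_b = P(e_b) - P(e_(b+1)) on Sigma, up to
   the constant 1 that appears when b + 1 wraps around to 0. *)

lemma psum_add: "psum (\<lambda>j. F j + G j) i = psum F i + psum G i"
  unfolding psum_def by (simp add: sum.distrib)

lemma psum_diff: "psum (\<lambda>j. F j - G j) i = psum F i - psum G i"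
  unfolding psum_def by (simp add: sum_subtractf)

lemma psum_indic: "psum (indic b) i = (if b \<le> i then 1 else 0)"
  unfolding psum_def indic_def by (simp add: sum.delta)

lemma hist_diff_of_shift:
  assumes "tl s = butlast t" and "s \<noteq> []" and "t \<noteq> []"
  shows "hist s j - hist t j = indic (hd s) j - indic (last t) j"
proof -
  have "count_list s j = count_list (tl s) j + (if hd s = j then 1 else 0)"
    using \<open>s \<noteq> []\<close> by (cases s) auto
  moreover have "count_list t j = count_list (butlast t) j + (if last t = j then 1 else 0)"
    using \<open>t \<noteq> []\<close> by (cases t rule: rev_cases) auto
  ultimately show ?thesis
    using assms(1) unfolding hist_def indic_def by auto
qed

lemma indic_eq_psum_indic_succ:
  assumes "b < k" and "i < k"
  shows "indic b i = psum (indic b) i - psum (indic ((b + 1) mod k)) i + (if b + 1 = k then 1 else 0)"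
proof (cases "b + 1 = k")
  case True
  then show ?thesis using assms by (auto simp: psum_indic indic_def)
next
  case False
  then have "(b + 1) mod k = b + 1" using assms(1) by simp
  then show ?thesis using False by (auto simp: psum_indic indic_def)
qed

lemma valid_arc_psum_diff:
  assumes "n \<ge> 1" and "valid_arc k n d s t"
  shows "psum (\<lambda>j. hist s j + indic (d s) j) i - psum (\<lambda>j. hist t j + indic (d t) j) i
    = psum (indic (s ! 0)) i - psum (indic ((s ! 0 + 1) mod k)) i"
proof -
  define b where "b = s ! 0"
  define c where "c = t ! (n - 1)"
  have "db_arc k n s t"
    and valid: "((b + 1) mod k = c \<and> d s = d t) \<or> ((b + 1) mod k = d t \<and> c = d s)"
    using assms(2) unfolding valid_arc_def b_def c_def Let_def by auto
  then have len: "length s = n" "length t = n" and shift: "tl s = butlast t"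
    unfolding db_arc_def words_def by auto
  then have "s \<noteq> []" "t \<noteq> []"
    using \<open>n \<ge> 1\<close> by auto
  then have "hd s = b" "last t = c"
    using len unfolding b_def c_def by (auto simp: hd_conv_nth last_conv_nth)
  then have hist_diff: "hist s j - hist t j = indic b j - indic c j" for j
    using hist_diff_of_shift[OF shift \<open>s \<noteq> []\<close> \<open>t \<noteq> []\<close>] by simp
  have "psum (\<lambda>j. hist s j + indic (d s) j) i - psum (\<lambda>j. hist t j + indic (d t) j) i
      = psum (\<lambda>j. (hist s j - hist t j) + (indic (d s) j - indic (d t) j)) i"
    by (simp only: psum_diff[symmetric]) (simp add: algebra_simps)
  also have "\<dots> = psum (indic b) i - psum (indic c) i + psum (indic (d s)) i - psum (indic (d t)) i"
    by (simp add: hist_diff psum_add psum_diff)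
  also have "\<dots> = psum (indic b) i - psum (indic ((b + 1) mod k)) i"
    using valid by auto
  finally show ?thesis unfolding b_def .
qed

theorem lemma3:
  fixes k n :: nat and d :: "nat list \<Rightarrow> nat" and s t :: "nat list"
  assumes "k \<ge> 1" and "n \<ge> 1"
    and "is_depth_assignment k n d"
    and "valid_arc k n d s t"
  shows "cong_K k (indic (s ! 0))
           (\<lambda>i. psum (\<lambda>j. hist s j + indic (d s) j) i - psum (\<lambda>j. hist t j + indic (d t) j) i)"
proof -
  have "s ! 0 \<in> set s"
    using assms(2,4) unfolding valid_arc_def db_arc_def words_def by auto
  then have "s ! 0 < k"
    using assms(4) unfolding valid_arc_def db_arc_def words_def by auto
  then have "indic (s ! 0) i
      - (psum (\<lambda>j. hist s j + indic (d s) j) i - psum (\<lambda>j. hist t j + indic (d t) j) i)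
      = (if s ! 0 + 1 = k then 1 else 0)" if "i < k" for i
    using indic_eq_psum_indic_succ[OF _ that] valid_arc_psum_diff[OF assms(2,4)] by simp
  then show ?thesis
    unfolding cong_K_def by blast
qed

end
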